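(* Let $G$ be a graph, $\mathrm{Colors}=\{a_1,\ldots,a_q\}$, and consider a color-counting 1-locally checkable problem on $G$ (lists $L_v$, weight set $(\mathrm{Weights},\preceq,\circledast)$, weights $w_{v,a}$, color-counting check function $check$), and let $e_G$ be a clique-width $k$-expression of $G$ (irredundant and satisfying the standing relabeling assumption below). Let $N_0\in[0,\mathcal{N}]^{k\times q}$ be the all-zero matrix. Then the minimum weight of a proper coloring of $G$ equals the minimum of $\lambda(e_G,C,N_0)$ over all matrices $C\in[0,\mathcal{N}]^{k\times q}$ such that $C[i,a]=0$ for every label $i\in\overline{\ell(e_G)}$ and every color $a\in\mathrm{Colors}$.
   Context: Weight set: $(\mathrm{Weights},\preceq,\circledast)$ where $\preceq$ is a total order with a maximum element $\mathrm{Error}$, $\min$ denotes the minimum w.r.t. $\preceq$ (the minimum of an empty set is $\mathrm{Error}$), and $\circledast$ is a closed, commutative, associative binary operation with a neutral element, whose absorbing element is $\mathrm{Error}$, and such that $s_1\preceq s_2$ implies $s_1\circledast s_3\preceq s_2\circledast s_3$. A color-counting 1-locally checkable problem is given by: a simple finite graph $G$; colors $\mathrm{Colors}=\{a_1,\ldots,a_q\}$; for each $v$ a nonempty list $L_v\subseteq \mathrm{Colors}$; a weight set; weights $w_{v,a}\in\mathrm{Weights}\setminus\{\mathrm{Error}\}$ for $a\in L_v$; and a function $check(v,a,n_1,\ldots,n_q)\in\{\mathrm{True},\mathrm{False}\}$ ($v$ a vertex, $a$ a color, $n_j$ nonnegative integers). A coloring $c:V(G)\to\mathrm{Colors}$ is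 valid if $c(v)\in L_v$ for all $v$; its weight is $w(c)=\circledast_{v\in V(G)} w_{v,c(v)}$; it is proper if valid and $check(v,c(v),n_1,\ldots,n_q)$ holds for all $v$, where $n_j=|\{u\in N_G(v): c(u)=a_j\}|$. The problem asks for the minimum weight of a proper coloring. $\mathcal{N}\in[1,|V(G)|]$ is an integer with $check(v,a,n_1,\ldots,n_q)=check(v,a,\min(\mathcal{N},n_1),\ldots,\min(\mathcal{N},n_q))$ for all $v,a,n_1,\ldots,n_q$. $[x,y]$ denotes $\{x,x+1,\ldots,y\}$. Clique-width $k$-expressions use labels in $[1,k]$ and operations: $i(v)$ (new vertex $v$ with label $i$), $e_1\oplus e_2$ (disjoint union), $\eta_{i,j}(e)$, $i\neq j$ (add all edges between label-$i$ and label-$j$ vertices), $\rho_{i\to j}(e)$ (rename label $i$ to $j$). $G_e$ is the labeled graph built by $e$; subexpressions correspond to subtrees of the expression tree. The expression is irredundant: whenever $\eta_{i,j}$ is applied, there are no existing edges between label-$i$ and label-$j$ vertices. Standing assumption: in every relabeling $\rho_{i\to j}(e)$ occurring, some vertex of $G_e$ has label $j$. For a subexpression $e$, $\ell_e(v)$ is the label of $v$ in $G_e$, and $\overline{\ell(e)}$ is the set of labels $i\in[1,k]$ such that no vertex of $G_e$ has label $i$. $(C,N)$-coloring: for a subexpression $e$ of $e_G$ and $C,N\in[0,\mathcal{N}]^{k\times q}$ (rows indexed by labels, columns by colors), a valid coloring $c$ of $G_e$ (i.e. $c(v)\in L_v$) is a $(C,N)$-coloring of $G_e$ if (C1) $\min(\mathcal{N},|\{v\in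 V(G_e): c(v)=a,\ \ell_e(v)=i\}|)=C[i,a]$ for all $i,a$; and (C2) for every $v\in V(G_e)$, $check(v,c(v),n_1,\ldots,n_q)$ is true, where $n_j=\min(\mathcal{N},N[\ell_e(v),a_j]+|\{u\in N_{G_e}(v):c(u)=a_j\}|)$. $\lambda(e,C,N)$ is the minimum weight $w(c)=\circledast_{v\in V(G_e)}w_{v,c(v)}$ over all $(C,N)$-colorings of $G_e$ ($\mathrm{Error}$ if none exists). *)

theory Defs
  imports Main
begin

definition weight_set :: "'w::linorder \<Rightarrow> ('w \<Rightarrow> 'w \<Rightarrow> 'w) \<Rightarrow> 'w \<Rightarrow> bool" where
  "weight_set err op one \<longleftrightarrow>
     (\<forall>x. x \<le> err) \<and>
     comm_monoid op one \<and>
     (\<forall>x. op x err = err) \<and>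
     (\<forall>s1 s2 s3. s1 \<le> s2 \<longrightarrow> op s1 s3 \<le> op s2 s3)"

definition wmin :: "'w::linorder \<Rightarrow> 'w set \<Rightarrow> 'w" where
  "wmin err S = (if S = {} then err else Min S)"

definition wprod :: "('w \<Rightarrow> 'w \<Rightarrow> 'w) \<Rightarrow> 'w \<Rightarrow> ('v \<Rightarrow> 'w) \<Rightarrow> 'v set \<Rightarrow> 'w" where
  "wprod op one f A = comm_monoid_set.F op one f A"

datatype 'v cw =
    Vert nat 'v
  | Union "'v cw" "'v cw"
  | Join nat nat "'v cw"
  | Relab nat nat "'v cw"

fun verts :: "'v cw \<Rightarrow> 'v set" where
  "verts (Vert i v) = {v}"
| "verts (Union e1 e2) = verts e1 \<union> verts e2"
| "verts (Join i j e) = verts e"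
| "verts (Relab i j e) = verts e"

text \<open>lab e v is the label of v in G_e (meaningful for v in verts e).\<close>
fun lab :: "'v cw \<Rightarrow> 'v \<Rightarrow> nat" where
  "lab (Vert i v) u = i"
| "lab (Union e1 e2) u = (if u \<in> verts e1 then lab e1 u else lab e2 u)"
| "lab (Join i j e) u = lab e u"
| "lab (Relab i j e) u = (if lab e u = i then j else lab e u)"

fun edges :: "'v cw \<Rightarrow> ('v \<times> 'v) set" where
  "edges (Vert i v) = {}"
| "edges (Union e1 e2) = edges e1 \<union> edges e2"
| "edges (Join i j e) = edges e \<union>
     {(u, w). u \<in> verts e \<and> w \<in> verts e \<and>
              ((lab e u = i \<and> lab e w = j) \<or> (lab e u = j \<and> lab e w = i))}"
| "edges (Relab i j e) = edges e"

fun cw_expr :: "nat \<Rightarrow> 'v cw \<Rightarrow> bool" where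
  "cw_expr k (Vert i v) \<longleftrightarrow> i \<in> {1..k}"
| "cw_expr k (Union e1 e2) \<longleftrightarrow> cw_expr k e1 \<and> cw_expr k e2 \<and> verts e1 \<inter> verts e2 = {}"
| "cw_expr k (Join i j e) \<longleftrightarrow> cw_expr k e \<and> i \<in> {1..k} \<and> j \<in> {1..k} \<and> i \<noteq> j \<and>
     \<comment> \<open>irredundance\<close>
     (\<forall>u w. (u, w) \<in> edges e \<longrightarrow> \<not> (lab e u = i \<and> lab e w = j))"
| "cw_expr k (Relab i j e) \<longleftrightarrow> cw_expr k e \<and> i \<in> {1..k} \<and> j \<in> {1..k} \<and>
     \<comment> \<open>standing assumption\<close>
     (\<exists>v \<in> verts e. lab e v = j)"

definition unused_labels :: "nat \<Rightarrow> 'v cw \<Rightarrow> nat set" where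
  "unused_labels k e = {i \<in> {1..k}. \<forall>v \<in> verts e. lab e v \<noteq> i}"

text \<open>Colors are a_1,...,a_q, represented by 1..q. Count vectors (n_1,...,n_q)
  are represented as functions nat => nat that are 0 outside {1..q}.\<close>

definition valid_coloring :: "'v set \<Rightarrow> ('v \<Rightarrow> nat set) \<Rightarrow> ('v \<Rightarrow> nat) \<Rightarrow> bool" where
  "valid_coloring V L c \<longleftrightarrow> (\<forall>v \<in> V. c v \<in> L v)"

definition proper_coloring ::
  "'v set \<Rightarrow> ('v \<times> 'v) set \<Rightarrow> nat \<Rightarrow> ('v \<Rightarrow> nat set) \<Rightarrow>
   ('v \<Rightarrow> nat \<Rightarrow> (nat \<Rightarrow> nat) \<Rightarrow> bool) \<Rightarrow> ('v \<Rightarrow> nat) \<Rightarrow> bool" where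
  "proper_coloring V E q L check c \<longleftrightarrow> valid_coloring V L c \<and>
     (\<forall>v \<in> V. check v (c v)
        (\<lambda>j. if j \<in> {1..q} then card {u \<in> V. (v, u) \<in> E \<and> c u = j} else 0))"

definition coloring_weight :: "('w \<Rightarrow> 'w \<Rightarrow> 'w) \<Rightarrow> 'w \<Rightarrow> ('v \<Rightarrow> nat \<Rightarrow> 'w) \<Rightarrow> 'v set \<Rightarrow> ('v \<Rightarrow> nat) \<Rightarrow> 'w" where
  "coloring_weight op one w V c = wprod op one (\<lambda>v. w v (c v)) V"

text \<open>Matrices in [0,NN]^{k x q}: rows 1..k (labels), columns 1..q (colors);
  entries outside this index range are fixed to 0.\<close>
definition mats :: "nat \<Rightarrow> nat \<Rightarrow> nat \<Rightarrow> (nat \<Rightarrow> nat \<Rightarrow> nat) set" where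
  "mats k q NN = {C. \<forall>i a. (i \<in> {1..k} \<and> a \<in> {1..q} \<longrightarrow> C i a \<le> NN) \<and>
                           (\<not> (i \<in> {1..k} \<and> a \<in> {1..q}) \<longrightarrow> C i a = 0)}"

definition CN_coloring ::
  "nat \<Rightarrow> nat \<Rightarrow> nat \<Rightarrow> ('v \<Rightarrow> nat set) \<Rightarrow> ('v \<Rightarrow> nat \<Rightarrow> (nat \<Rightarrow> nat) \<Rightarrow> bool) \<Rightarrow>
   'v cw \<Rightarrow> (nat \<Rightarrow> nat \<Rightarrow> nat) \<Rightarrow> (nat \<Rightarrow> nat \<Rightarrow> nat) \<Rightarrow> ('v \<Rightarrow> nat) \<Rightarrow> bool" where
  "CN_coloring k q NN L check e C N c \<longleftrightarrow>
     valid_coloring (verts e) L c \<and>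
     (\<forall>i \<in> {1..k}. \<forall>a \<in> {1..q}.
        min NN (card {v \<in> verts e. c v = a \<and> lab e v = i}) = C i a) \<and>
     (\<forall>v \<in> verts e. check v (c v)
        (\<lambda>j. if j \<in> {1..q}
             then min NN (N (lab e v) j + card {u \<in> verts e. (v, u) \<in> edges e \<and> c u = j})
             else 0))"

definition lambda ::
  "'w::linorder \<Rightarrow> ('w \<Rightarrow> 'w \<Rightarrow> 'w) \<Rightarrow> 'w \<Rightarrow> ('v \<Rightarrow> nat \<Rightarrow> 'w) \<Rightarrow>
   nat \<Rightarrow> nat \<Rightarrow> nat \<Rightarrow> ('v \<Rightarrow> nat set) \<Rightarrow> ('v \<Rightarrow> nat \<Rightarrow> (nat \<Rightarrow> nat) \<Rightarrow> bool) \<Rightarrow>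
   'v cw \<Rightarrow> (nat \<Rightarrow> nat \<Rightarrow> nat) \<Rightarrow> (nat \<Rightarrow> nat \<Rightarrow> nat) \<Rightarrow> 'w" where
  "lambda err op one w k q NN L check e C N =
     wmin err {coloring_weight op one w (verts e) c | c. CN_coloring k q NN L check e C N c}"

end

theory Submission
  imports Defs "HOL-Library.FuncSet"
begin

(* For N = 0 the condition (C2) of a (C,N)-coloring is exactly properness in G_e, because
   check only sees neighbour counts truncated at NN. Hence every proper coloring c of G is a
   (C,0)-coloring of G_eG for exactly one C, namely its truncated count matrix, and that C
   vanishes on unused labels. The proper colorings are thus partitioned by C, and the minimum
   over a union is the minimum of the minima over the parts. *)

lemma le_wmin_iff:
  fixes err :: "'w::linorder"
  assumes "finite A" and "\<And>y. y \<le> err"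
  shows "x \<le> wmin err A \<longleftrightarrow> x \<le> err \<and> (\<forall>a\<in>A. x \<le> a)"
  using assms by (auto simp: wmin_def)

lemma wmin_mem_insert:
  assumes "finite A"
  shows "wmin err A \<in> insert err A"
  using assms by (simp add: wmin_def)

lemma wmin_UN:
  fixes err :: "'w::linorder"
  assumes fin: "finite (\<Union>i\<in>I. S i)" and top: "\<And>y. y \<le> err"
  shows "wmin err (\<Union>i\<in>I. S i) = wmin err ((\<lambda>i. wmin err (S i)) ` I)"
proof -
  have fin_S: "finite (S i)" if "i \<in> I" for i
    using that fin by (meson UN_upper finite_subset)
  have "(\<lambda>i. wmin err (S i)) ` I \<subseteq> insert err (\<Union>i\<in>I. S i)"
    using wmin_mem_insert[OF fin_S] by blast
  then have fin_mins: "finite ((\<lambda>i. wmin err (S i)) ` I)"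
    using fin by (simp add: finite_subset)
  have "x \<le> wmin err (\<Union>i\<in>I. S i) \<longleftrightarrow> x \<le> wmin err ((\<lambda>i. wmin err (S i)) ` I)" for x
    using le_wmin_iff[OF fin top] le_wmin_iff[OF fin_mins top] le_wmin_iff[OF fin_S top]
    by auto
  then show ?thesis
    by (meson order.antisym order.refl)
qed

lemma finite_verts: "finite (verts e)"
  by (induction e) auto

lemma coloring_weight_restrict:
  assumes "comm_monoid op one"
  shows "coloring_weight op one w V (restrict c V) = coloring_weight op one w V c"
proof -
  interpret comm_monoid_set op one
    by (rule comm_monoid_set.intro[OF assms])
  show ?thesis
    unfolding coloring_weight_def wprod_def by (rule cong) auto
qed

lemma finite_valid_coloring_weights:
  assumes "comm_monoid op one" and "finite V" and "\<forall>v\<in>V. finite (L v)"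
  shows "finite {coloring_weight op one w V c | c. valid_coloring V L c}"
proof -
  have "{coloring_weight op one w V c | c. valid_coloring V L c}
      \<subseteq> coloring_weight op one w V ` PiE V L"
  proof
    fix x assume "x \<in> {coloring_weight op one w V c | c. valid_coloring V L c}"
    then obtain c where c: "valid_coloring V L c" "x = coloring_weight op one w V c"
      by blast
    then have "restrict c V \<in> PiE V L"
      by (auto simp: valid_coloring_def)
    then show "x \<in> coloring_weight op one w V ` PiE V L"
      using c(2) coloring_weight_restrict[OF assms(1)] by (metis image_eqI)
  qed
  moreover have "finite (PiE V L)"
    using assms(2,3) by (intro finite_PiE) auto
  ultimately show ?thesis
    by (rule finite_subset[OF _ finite_imageI])
qed

definition count_matrix :: "nat \<Rightarrow> nat \<Rightarrow> nat \<Rightarrow> 'v cw \<Rightarrow> ('v \<Rightarrow> nat) \<Rightarrow> nat \<Rightarrow> nat \<Rightarrow> nat" where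
  "count_matrix k q NN e c i a =
     (if i \<in> {1..k} \<and> a \<in> {1..q}
      then min NN (card {v \<in> verts e. c v = a \<and> lab e v = i}) else 0)"

lemma count_matrix_mem_mats: "count_matrix k q NN e c \<in> mats k q NN"
  by (simp add: mats_def count_matrix_def)

lemma count_matrix_unused_label:
  assumes "i \<in> unused_labels k e"
  shows "count_matrix k q NN e c i a = 0"
proof -
  have "{v \<in> verts e. c v = a \<and> lab e v = i} = {}"
    using assms by (auto simp: unused_labels_def)
  then have "card {v \<in> verts e. c v = a \<and> lab e v = i} = 0"
    by (simp only: card.empty)
  then show ?thesis
    by (simp add: count_matrix_def)
qed

lemma check_truncated_counts:
  assumes "\<forall>v a n. (\<forall>j. j \<notin> {1..q} \<longrightarrow> n j = 0) \<longrightarrow>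
             check v a n = check v a (\<lambda>j. min NN (n j))"
  shows "check v a (\<lambda>j. if j \<in> {1..q} then min NN (card (X j)) else 0)
     \<longleftrightarrow> check v a (\<lambda>j. if j \<in> {1..q} then card (X j) else 0)"
proof -
  have "(\<lambda>j. if j \<in> {1..q} then min NN (card (X j)) else 0)
      = (\<lambda>j. min NN (if j \<in> {1..q} then card (X j) else 0))"
    by auto
  moreover have "check v a (\<lambda>j. if j \<in> {1..q} then card (X j) else 0)
      \<longleftrightarrow> check v a (\<lambda>j. min NN (if j \<in> {1..q} then card (X j) else 0))"
    by (rule assms[rule_format]) auto
  ultimately show ?thesis
    by simp
qed

lemma CN_coloring_zero_iff:
  assumes "\<forall>v a n. (\<forall>j. j \<notin> {1..q} \<longrightarrow> n j = 0) \<longrightarrow>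
             check v a n = check v a (\<lambda>j. min NN (n j))"
  shows "CN_coloring k q NN L check e C (\<lambda>_ _. 0) c \<longleftrightarrow>
           proper_coloring (verts e) (edges e) q L check c \<and>
           (\<forall>i\<in>{1..k}. \<forall>a\<in>{1..q}. C i a = count_matrix k q NN e c i a)"
proof -
  have "check v (c v) (\<lambda>j. if j \<in> {1..q} then min NN ((\<lambda>_ _. 0) (lab e v) j +
          card {u \<in> verts e. (v, u) \<in> edges e \<and> c u = j}) else 0)
    \<longleftrightarrow> check v (c v) (\<lambda>j. if j \<in> {1..q} then
          card {u \<in> verts e. (v, u) \<in> edges e \<and> c u = j} else 0)" for v
    using check_truncated_counts[OF assms, of v "c v"
        "\<lambda>j. {u \<in> verts e. (v, u) \<in> edges e \<and> c u = j}"]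
    by (simp cong: if_cong)
  then show ?thesis
    unfolding CN_coloring_def proper_coloring_def count_matrix_def by auto
qed

theorem lemma1:
  fixes V :: "'v set" and E :: "('v \<times> 'v) set"
    and q k NN :: nat
    and L :: "'v \<Rightarrow> nat set"
    and err one :: "'w::linorder" and op :: "'w \<Rightarrow> 'w \<Rightarrow> 'w"
    and w :: "'v \<Rightarrow> nat \<Rightarrow> 'w"
    and check :: "'v \<Rightarrow> nat \<Rightarrow> (nat \<Rightarrow> nat) \<Rightarrow> bool"
    and eG :: "'v cw"
  assumes ws: "weight_set err op one"
    and lists: "\<forall>v \<in> V. L v \<noteq> {} \<and> L v \<subseteq> {1..q}"
    and weights: "\<forall>v \<in> V. \<forall>a \<in> L v. w v a \<noteq> err"
    and NN: "NN \<in> {1..card V}"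
    and NN_check: "\<forall>v a n. (\<forall>j. j \<notin> {1..q} \<longrightarrow> n j = 0) \<longrightarrow>
                     check v a n = check v a (\<lambda>j. min NN (n j))"
    and expr: "cw_expr k eG"
    and GV: "V = verts eG"
    and GE: "E = edges eG"
  shows "wmin err {coloring_weight op one w V c | c. proper_coloring V E q L check c}
       = wmin err {lambda err op one w k q NN L check eG C (\<lambda>_ _. 0) | C.
                     C \<in> mats k q NN \<and>
                     (\<forall>i \<in> unused_labels k eG. \<forall>a \<in> {1..q}. C i a = 0)}"
proof -
  define good where "good = {C. C \<in> mats k q NN \<and>
    (\<forall>i \<in> unused_labels k eG. \<forall>a \<in> {1..q}. C i a = 0)}"
  define S where "S C = {coloring_weight op one w V c | c.
    CN_coloring k q NN L check eG C (\<lambda>_ _. 0) c}" for C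
  have top: "\<And>y. y \<le> err" and monoid: "comm_monoid op one"
    using ws by (simp_all add: weight_set_def)
  have CN_iff: "CN_coloring k q NN L check eG C (\<lambda>_ _. 0) c \<longleftrightarrow>
      proper_coloring V E q L check c \<and>
      (\<forall>i\<in>{1..k}. \<forall>a\<in>{1..q}. C i a = count_matrix k q NN eG c i a)" for C c
    unfolding GV GE by (rule CN_coloring_zero_iff[OF NN_check])
  have count_matrix_good: "count_matrix k q NN eG c \<in> good" for c
    unfolding good_def using count_matrix_mem_mats count_matrix_unused_label by blast
  have partition: "{coloring_weight op one w V c | c. proper_coloring V E q L check c}
      = (\<Union>C\<in>good. S C)"
    unfolding S_def using CN_iff count_matrix_good by blast
  have "finite {coloring_weight op one w V c | c. valid_coloring V L c}"
    using lists GV finite_verts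
    by (intro finite_valid_coloring_weights[OF monoid]) (auto intro: finite_subset)
  then have "finite (\<Union>C\<in>good. S C)"
    unfolding partition[symmetric] proper_coloring_def by (rule rev_finite_subset) blast
  then have "wmin err (\<Union>C\<in>good. S C) = wmin err ((\<lambda>C. wmin err (S C)) ` good)"
    using top by (rule wmin_UN)
  moreover have "lambda err op one w k q NN L check eG C (\<lambda>_ _. 0) = wmin err (S C)" for C
    unfolding lambda_def S_def GV ..
  ultimately show ?thesis
    unfolding partition good_def by (simp add: setcompr_eq_image)
qed

end
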